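(* Let $P\subseteq S_n$ be a permutation array with Hamming distance ${\rm hd}(P)=d$. Then $|P^{{\sf CT}^m}|=|P|$ for every positive integer $m<d/3$.
   Context: $S_n$ is the symmetric group on $\{0,1,\ldots,n-1\}$. A permutation array is a non-empty subset $P\subseteq S_n$. The Hamming distance of $\sigma,\tau\in S_n$ is ${\rm hd}(\sigma,\tau)=|\{x:\sigma(x)\neq\tau(x)\}|$, and ${\rm hd}(P)=\min\{{\rm hd}(\sigma,\tau):\sigma,\tau\in P,\ \sigma\neq\tau\}$. The contraction of $\sigma\in S_n$ is $\sigma^{\sf CT}\in S_{n-1}$ (on $\{0,\ldots,n-2\}$) defined by $\sigma^{\sf CT}(x)=\sigma(n-1)$ if $x=\sigma^{-1}(n-1)$ and $\sigma^{\sf CT}(x)=\sigma(x)$ otherwise (i.e. delete $n-1$ from the cycle notation of $\sigma$). For $1\le m\le n-1$, $\sigma^{{\sf CT}^m}=(\sigma^{{\sf CT}^{m-1}})^{\sf CT}\in S_{n-m}$ with $\sigma^{{\sf CT}^1}=\sigma^{\sf CT}$, and $P^{{\sf CT}^m}=\{\sigma^{{\sf CT}^m}:\sigma\in P\}$. *)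

theory Defs
  imports "HOL-Combinatorics.Permutations"
begin

text \<open>Permutations of {0,...,n-1} are represented as functions nat \<Rightarrow> nat with
  \<sigma> permutes {..<n} (identity outside {..<n}).\<close>

definition hd :: "nat \<Rightarrow> (nat \<Rightarrow> nat) \<Rightarrow> (nat \<Rightarrow> nat) \<Rightarrow> nat" where
  "hd n \<sigma> \<tau> = card {x \<in> {..<n}. \<sigma> x \<noteq> \<tau> x}"

definition hdP :: "nat \<Rightarrow> (nat \<Rightarrow> nat) set \<Rightarrow> nat" where
  "hdP n P = Min {hd n \<sigma> \<tau> | \<sigma> \<tau>. \<sigma> \<in> P \<and> \<tau> \<in> P \<and> \<sigma> \<noteq> \<tau>}"

text \<open>Contraction S_n \<rightarrow> S_(n-1): the element mapped to n-1 is sent to \<sigma>(n-1),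
  and n-1 becomes a fixed point (i.e. deleted from the support).\<close>
definition ct :: "nat \<Rightarrow> (nat \<Rightarrow> nat) \<Rightarrow> (nat \<Rightarrow> nat)" where
  "ct n \<sigma> = (\<lambda>x. if x = n - 1 then x else if \<sigma> x = n - 1 then \<sigma> (n - 1) else \<sigma> x)"

fun ctm :: "nat \<Rightarrow> nat \<Rightarrow> (nat \<Rightarrow> nat) \<Rightarrow> (nat \<Rightarrow> nat)" where
  "ctm n 0 \<sigma> = \<sigma>"
| "ctm n (Suc m) \<sigma> = ct (n - m) (ctm n m \<sigma>)"

end

theory Submission
  imports Defs
begin

text \<open>One contraction step of an injective \<sigma> is the composition with the transposition of
  k - 1 and \<sigma>(k - 1), so it changes \<sigma> only at k - 1 and at the preimage of k - 1.
  Hence the m-fold contraction agrees with \<sigma> outside the last m points n - m, ..., n - 1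
  and at most m further points, one preimage per step. Two members of P with the same
  m-fold contraction therefore differ on at most m + m + m < hd(P) points, so they are equal.\<close>

lemma ct_eq_transpose_comp:
  assumes "inj \<sigma>"
  shows "ct k \<sigma> = Transposition.transpose (k - 1) (\<sigma> (k - 1)) \<circ> \<sigma>"
  using assms unfolding ct_def by (intro ext) (auto simp: transpose_def dest: injD)

lemma inj_ctm: "inj \<sigma> \<Longrightarrow> inj (ctm n m \<sigma>)"
  by (induction m) (simp_all add: ct_eq_transpose_comp inj_compose del: comp_apply)

text \<open>The j-th point is the one that the contraction step ct (n - j) redirects.\<close>
definition ctm_preimages :: "nat \<Rightarrow> nat \<Rightarrow> (nat \<Rightarrow> nat) \<Rightarrow> nat set" where
  "ctm_preimages n m \<sigma> = (\<lambda>j. inv (ctm n j \<sigma>) (n - Suc j)) ` {..<m}"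

lemma card_ctm_preimages_le: "card (ctm_preimages n m \<sigma>) \<le> m"
  unfolding ctm_preimages_def using card_image_le[of "{..<m}"] by simp

lemma ctm_changes_subset:
  assumes "inj \<sigma>"
  shows "{x \<in> {..<n}. ctm n m \<sigma> x \<noteq> \<sigma> x} \<subseteq> {n - m..<n} \<union> ctm_preimages n m \<sigma>"
proof (induction m)
  case 0
  then show ?case by simp
next
  case (Suc m)
  define \<rho> where "\<rho> = ctm n m \<sigma>"
  have mono: "{n - m..<n} \<union> ctm_preimages n m \<sigma> \<subseteq> {n - Suc m..<n} \<union> ctm_preimages n (Suc m) \<sigma>"
    unfolding ctm_preimages_def by (intro Un_mono image_mono) auto
  show ?case
  proof
    fix x
    assume x: "x \<in> {x \<in> {..<n}. ctm n (Suc m) \<sigma> x \<noteq> \<sigma> x}"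
    have "ctm n (Suc m) \<sigma> x
        = (if x = n - Suc m then x else if \<rho> x = n - Suc m then \<rho> (n - Suc m) else \<rho> x)"
      by (simp add: \<rho>_def ct_def)
    then consider "\<rho> x \<noteq> \<sigma> x" | "x = n - Suc m" | "\<rho> x = n - Suc m"
      using x by (metis (mono_tags, lifting) mem_Collect_eq)
    then show "x \<in> {n - Suc m..<n} \<union> ctm_preimages n (Suc m) \<sigma>"
    proof cases
      case 1
      then have "x \<in> {n - m..<n} \<union> ctm_preimages n m \<sigma>"
        using x Suc.IH by (auto simp: \<rho>_def)
      then show ?thesis using mono by blast
    next
      case 2
      then show ?thesis using x by simp
    next
      case 3
      then have "x = inv \<rho> (n - Suc m)"
        using inj_ctm[OF assms] by (metis \<rho>_def inv_f_f)
      then show ?thesis by (auto simp: \<rho>_def ctm_preimages_def)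
    qed
  qed
qed

lemma hd_le_if_ctm_eq:
  assumes "inj \<sigma>" "inj \<tau>" and "ctm n m \<sigma> = ctm n m \<tau>"
  shows "hd n \<sigma> \<tau> \<le> 3 * m"
proof -
  have "{x \<in> {..<n}. \<sigma> x \<noteq> \<tau> x}
      \<subseteq> {x \<in> {..<n}. ctm n m \<sigma> x \<noteq> \<sigma> x} \<union> {x \<in> {..<n}. ctm n m \<tau> x \<noteq> \<tau> x}"
    using assms(3) by auto
  also have "\<dots> \<subseteq> {n - m..<n} \<union> ctm_preimages n m \<sigma> \<union> ctm_preimages n m \<tau>"
    using ctm_changes_subset[OF assms(1)] ctm_changes_subset[OF assms(2)] by blast
  finally have "hd n \<sigma> \<tau> \<le> card ({n - m..<n} \<union> ctm_preimages n m \<sigma> \<union> ctm_preimages n m \<tau>)"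
    unfolding hd_def ctm_preimages_def by (intro card_mono) auto
  also have "\<dots> \<le> card {n - m..<n} + card (ctm_preimages n m \<sigma>) + card (ctm_preimages n m \<tau>)"
    by (meson card_Un_le add_le_mono1 le_trans)
  also have "\<dots> \<le> m + m + m"
    using card_ctm_preimages_le by (intro add_mono) simp_all
  finally show ?thesis by linarith
qed

lemma hd_le: "hd n \<alpha> \<beta> \<le> n"
  unfolding hd_def using card_mono[of "{..<n}" "{x \<in> {..<n}. \<alpha> x \<noteq> \<beta> x}"] by auto

lemma hdP_le_hd:
  assumes "\<sigma> \<in> P" "\<tau> \<in> P" "\<sigma> \<noteq> \<tau>"
  shows "hdP n P \<le> hd n \<sigma> \<tau>"
proof -
  have "{hd n \<alpha> \<beta> | \<alpha> \<beta>. \<alpha> \<in> P \<and> \<beta> \<in> P \<and> \<alpha> \<noteq> \<beta>} \<subseteq> {..n}"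
    using hd_le by fastforce
  then have "finite {hd n \<alpha> \<beta> | \<alpha> \<beta>. \<alpha> \<in> P \<and> \<beta> \<in> P \<and> \<alpha> \<noteq> \<beta>}"
    by (rule finite_subset) simp
  then show ?thesis
    unfolding hdP_def by (rule Min_le) (use assms in blast)
qed

lemma inj_on_ctm:
  assumes "\<forall>\<sigma>\<in>P. inj \<sigma>" and "3 * m < hdP n P"
  shows "inj_on (ctm n m) P"
proof (rule inj_onI, rule ccontr)
  fix \<sigma> \<tau>
  assume "\<sigma> \<in> P" "\<tau> \<in> P" "ctm n m \<sigma> = ctm n m \<tau>" "\<sigma> \<noteq> \<tau>"
  then have "hdP n P \<le> hd n \<sigma> \<tau>" and "hd n \<sigma> \<tau> \<le> 3 * m"
    using assms(1) by (simp_all add: hdP_le_hd hd_le_if_ctm_eq)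
  then show False
    using assms(2) by linarith
qed

theorem theorem3p1:
  fixes n m :: nat and P :: "(nat \<Rightarrow> nat) set"
  assumes "P \<noteq> {}" and "\<forall>\<sigma>\<in>P. \<sigma> permutes {..<n}"
    and "0 < m" and "3 * m < hdP n P"
  shows "card (ctm n m ` P) = card P"
proof -
  have "\<forall>\<sigma>\<in>P. inj \<sigma>"
    using assms(2) permutes_inj by blast
  then show ?thesis
    by (rule card_image[OF inj_on_ctm[OF _ assms(4)]])
qed

end
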